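(* Let $\Omega\subset\mathbb{R}^d$, let $\Psi_K,\Phi_K$ be stationary, positive definite kernels, integrable on $\mathbb{R}^d$, and set $\Psi_G=\Psi_K$, $\Phi_G=\Phi_K$. Let $X=\{x_1,\dots,x_n\}\subset\Omega$ be a fixed design and let $\epsilon_1,\dots,\epsilon_n$ be i.i.d. with mean zero and variance $\sigma_\epsilon^2$. Let $f\in\mathcal{N}_{\Psi_K}(\Omega)$ be deterministic with data $y_k=f(x_k)+\epsilon_k$, and let $\hat f_m$ be the kernel ridge regression estimator $$\hat f_m=\operatorname*{argmin}_{g\in\mathcal{N}_{\Phi_K}(\Omega)}\Big(\frac1n\sum_{k=1}^n(y_k-g(x_k))^2+\lambda_m\|g\|_{\mathcal{N}_{\Phi_K}(\Omega)}^2\Big).$$ Let $Z\sim GP(0,\Psi_G)$ (zero mean, covariance $\Psi_G(x-x')$), independent of the noise, with data $y'_k=Z(x_k)+\epsilon_k$, and let $\hat f_G(x)=r_m(x)^T(R_m+\mu_mI_n)^{-1}Y'$, where $r_m(x)=(\Phi_G(x-x_j))_j$, $R_m=(\Phi_G(x_j-x_k))_{jk}$, $Y'=(y'_k)_k$. Suppose $\lambda_m=\mu_m/n$. Then $$\mathbb{E}(f(x)-\hat f_m(x))^2\le C\,\mathbb{E}(Z(x)-\hat f_G(x))^2\quad\forall x\in\Omega,$$ where $C=\max(1,\|f\|_{\mathcal{N}_{\Psi_K}(\Omega)}^2)$.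
   Context: For a stationary positive definite kernel $K$, $\mathcal{N}_K(\Omega)$ denotes the reproducing kernel Hilbert space on $\Omega$: the closure of finite sums $\sum_k\beta_kK(\cdot-x_k)$, $x_k\in\Omega$, under the inner product $\langle\sum_k\beta_kK(\cdot-x_k),\sum_j\gamma_jK(\cdot-x'_j)\rangle=\sum_{k,j}\beta_k\gamma_jK(x_k-x'_j)$. *)

theory Defs
  imports "HOL-Analysis.Analysis" "HOL-Probability.Probability"
begin

text \<open>Finitely supported coefficient functions with centres in \<Omega>; they encode the
  finite sums \<open>\<Sum>_k \<beta>_k K(\<cdot> - x_k)\<close>.\<close>
definition fin_coeffs :: "'a set \<Rightarrow> ('a \<Rightarrow> real) \<Rightarrow> bool" where
  "fin_coeffs \<Omega> c \<longleftrightarrow> finite {y. c y \<noteq> 0} \<and> {y. c y \<noteq> 0} \<subseteq> \<Omega>"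

definition kfun :: "('a::ab_group_add \<Rightarrow> real) \<Rightarrow> ('a \<Rightarrow> real) \<Rightarrow> 'a \<Rightarrow> real" where
  "kfun K c x = (\<Sum>y\<in>{y. c y \<noteq> 0}. c y * K (x - y))"

definition kip :: "('a::ab_group_add \<Rightarrow> real) \<Rightarrow> ('a \<Rightarrow> real) \<Rightarrow> ('a \<Rightarrow> real) \<Rightarrow> real" where
  "kip K c d = (\<Sum>y\<in>{y. c y \<noteq> 0}. \<Sum>z\<in>{z. d z \<noteq> 0}. c y * d z * K (y - z))"

definition stationary_pd_kernel :: "('a::ab_group_add \<Rightarrow> real) \<Rightarrow> bool" where
  "stationary_pd_kernel K \<longleftrightarrow> (\<forall>x. K (- x) = K x) \<and>
     (\<forall>c. finite {y. c y \<noteq> 0} \<and> (\<exists>y. c y \<noteq> 0) \<longrightarrow> kip K c c > 0)"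

text \<open>A sequence of finite sums which is Cauchy in the native norm and converges
  pointwise on \<Omega> to f (realising f as an element of the completion).\<close>
definition native_approx :: "('a::ab_group_add \<Rightarrow> real) \<Rightarrow> 'a set \<Rightarrow> (nat \<Rightarrow> 'a \<Rightarrow> real) \<Rightarrow> ('a \<Rightarrow> real) \<Rightarrow> bool" where
  "native_approx K \<Omega> c f \<longleftrightarrow> (\<forall>j. fin_coeffs \<Omega> (c j)) \<and>
     (\<forall>e>0. \<exists>N. \<forall>i\<ge>N. \<forall>j\<ge>N. kip K (\<lambda>y. c i y - c j y) (\<lambda>y. c i y - c j y) < e) \<and>
     (\<forall>x\<in>\<Omega>. (\<lambda>j. kfun K (c j) x) \<longlonglongrightarrow> f x)"

definition native_space :: "('a::ab_group_add \<Rightarrow> real) \<Rightarrow> 'a set \<Rightarrow> ('a \<Rightarrow> real) set" where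
  "native_space K \<Omega> = {f. \<exists>c. native_approx K \<Omega> c f}"

definition native_norm :: "('a::ab_group_add \<Rightarrow> real) \<Rightarrow> 'a set \<Rightarrow> ('a \<Rightarrow> real) \<Rightarrow> real" where
  "native_norm K \<Omega> f = (THE r. \<exists>c. native_approx K \<Omega> c f \<and>
      (\<lambda>j. sqrt (kip K (c j) (c j))) \<longlonglongrightarrow> r)"

definition krr_obj :: "('a::ab_group_add \<Rightarrow> real) \<Rightarrow> 'a set \<Rightarrow> ('n::finite \<Rightarrow> 'a) \<Rightarrow> ('n \<Rightarrow> real) \<Rightarrow> real \<Rightarrow> ('a \<Rightarrow> real) \<Rightarrow> real" where
  "krr_obj \<Phi> \<Omega> X y lam g =
     (1 / real CARD('n)) * (\<Sum>k\<in>UNIV. (y k - g (X k))^2) + lam * (native_norm \<Phi> \<Omega> g)^2"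

definition krr :: "('a::ab_group_add \<Rightarrow> real) \<Rightarrow> 'a set \<Rightarrow> ('n::finite \<Rightarrow> 'a) \<Rightarrow> ('n \<Rightarrow> real) \<Rightarrow> real \<Rightarrow> ('a \<Rightarrow> real)" where
  "krr \<Phi> \<Omega> X y lam = (SOME g. g \<in> native_space \<Phi> \<Omega> \<and>
      (\<forall>h\<in>native_space \<Phi> \<Omega>. krr_obj \<Phi> \<Omega> X y lam g \<le> krr_obj \<Phi> \<Omega> X y lam h))"

definition centered_gp :: "'w measure \<Rightarrow> 'a set \<Rightarrow> ('a::ab_group_add \<Rightarrow> real) \<Rightarrow> ('a \<Rightarrow> 'w \<Rightarrow> real) \<Rightarrow> bool" where
  "centered_gp M \<Omega> \<Psi> Z \<longleftrightarrow> (\<forall>c. fin_coeffs \<Omega> c \<and> (\<exists>y. c y \<noteq> 0) \<longrightarrow>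
     distributed M lborel (\<lambda>\<omega>. \<Sum>y\<in>{y. c y \<noteq> 0}. c y * Z y \<omega>)
        (normal_density 0 (sqrt (kip \<Psi> c c))))"

definition gp_pred :: "('a::ab_group_add \<Rightarrow> real) \<Rightarrow> ('n::finite \<Rightarrow> 'a) \<Rightarrow> real \<Rightarrow> real^'n \<Rightarrow> 'a \<Rightarrow> real" where
  "gp_pred \<Phi> X \<mu> Y x =
     (\<chi> j. \<Phi> (x - X j)) \<bullet> (matrix_inv ((\<chi> j k. \<Phi> (X j - X k)) + \<mu> *\<^sub>R mat 1) *v Y)"

end

theory Submission
  imports Defs
begin

text \<open>On \<open>\<Omega>\<close> the kernel ridge regression estimator coincides with the kernel sum whose
  coefficients solve the regularised Gram system, i.e. with the GP predictor; hence both
  estimators are the same linear smoother \<open>\<Sum>\<^sub>k w\<^sub>k y\<^sub>k\<close>. Let \<open>d\<close> be the coefficients of the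
  functional \<open>g \<mapsto> g(x) - \<Sum>\<^sub>k w\<^sub>k g(x\<^sub>k)\<close>. The noise being centered, uncorrelated and independent
  of \<open>Z\<close>, the KRR error is \<open>d(f)\<^sup>2 + \<sigma>\<^sup>2 |w|\<^sup>2\<close> and the GP error is \<open>\<langle>d, d\<rangle>\<^sub>\<Psi> + \<sigma>\<^sup>2 |w|\<^sup>2\<close>,
  since \<open>d(Z)\<close> is centered normal with variance \<open>\<langle>d, d\<rangle>\<^sub>\<Psi>\<close>. Cauchy-Schwarz in the native space,
  \<open>d(f)\<^sup>2 \<le> \<langle>d, d\<rangle>\<^sub>\<Psi> \<parallel>f\<parallel>\<^sup>2\<close>, concludes.\<close>

section \<open>Finite kernel sums\<close>

abbreviation finite_supp :: "('a \<Rightarrow> real) \<Rightarrow> bool" where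
  "finite_supp c \<equiv> finite {y. c y \<noteq> 0}"

definition pairing :: "('a \<Rightarrow> real) \<Rightarrow> ('a \<Rightarrow> real) \<Rightarrow> real" where
  "pairing c g = (\<Sum>y\<in>{y. c y \<noteq> 0}. c y * g y)"

lemma pairing_superset:
  assumes "finite S" "{y. c y \<noteq> 0} \<subseteq> S"
  shows "pairing c g = (\<Sum>y\<in>S. c y * g y)"
  unfolding pairing_def by (rule sum.mono_neutral_left) (use assms in auto)

lemma finite_supp_lin:
  assumes "finite_supp c" "finite_supp d"
  shows "finite_supp (\<lambda>y. s * c y + t * d y)"
  by (rule finite_subset[of _ "{y. c y \<noteq> 0} \<union> {y. d y \<noteq> 0}"]) (use assms in auto)

lemma finite_supp_diff: "finite_supp c \<Longrightarrow> finite_supp d \<Longrightarrow> finite_supp (\<lambda>y. c y - d y)"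
  using finite_supp_lin[of c d 1 "-1"] by simp

lemma finite_supp_add: "finite_supp c \<Longrightarrow> finite_supp d \<Longrightarrow> finite_supp (\<lambda>y. c y + d y)"
  using finite_supp_lin[of c d 1 1] by simp

lemma pairing_lin_left:
  assumes "finite_supp c" "finite_supp d"
  shows "pairing (\<lambda>y. s * c y + t * d y) g = s * pairing c g + t * pairing d g"
proof -
  let ?S = "{y. c y \<noteq> 0} \<union> {y. d y \<noteq> 0}"
  have "finite ?S" using assms by simp
  then show ?thesis
    by (subst (1 2 3) pairing_superset[of ?S])
       (auto simp: sum.distrib sum_distrib_left algebra_simps)
qed

lemma pairing_lin_right: "pairing c (\<lambda>y. s * g y + t * h y) = s * pairing c g + t * pairing c h"
  unfolding pairing_def by (simp add: sum.distrib sum_distrib_left algebra_simps)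

lemma supp_indicator_singleton [simp]: "{y. indicator {x} y \<noteq> (0::real)} = {x}"
  by (auto simp: indicator_def)

lemma pairing_indicator: "pairing (indicator {x}) g = g x"
  unfolding pairing_def by simp

lemma kfun_eq_pairing: "kfun K c x = pairing c (\<lambda>y. K (x - y))"
  unfolding kfun_def pairing_def ..

lemma kip_eq_pairing: "kip K c d = pairing c (kfun K d)"
  unfolding kip_def kfun_def pairing_def by (simp add: sum_distrib_left mult.assoc)

lemma kfun_lin:
  "finite_supp c \<Longrightarrow> finite_supp d \<Longrightarrow>
    kfun K (\<lambda>y. s * c y + t * d y) x = s * kfun K c x + t * kfun K d x"
  unfolding kfun_eq_pairing by (rule pairing_lin_left)

lemma kfun_diff: "finite_supp c \<Longrightarrow> finite_supp d \<Longrightarrow> kfun K (\<lambda>y. c y - d y) x = kfun K c x - kfun K d x"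
  using kfun_lin[of c d K 1 "-1"] by simp

lemma kfun_add: "finite_supp c \<Longrightarrow> finite_supp d \<Longrightarrow> kfun K (\<lambda>y. c y + d y) x = kfun K c x + kfun K d x"
  using kfun_lin[of c d K 1 1] by simp

lemma kip_lin_left:
  "finite_supp c \<Longrightarrow> finite_supp d \<Longrightarrow>
    kip K (\<lambda>y. s * c y + t * d y) e = s * kip K c e + t * kip K d e"
  unfolding kip_eq_pairing by (rule pairing_lin_left)

lemma kip_lin_right:
  "finite_supp d \<Longrightarrow> finite_supp e \<Longrightarrow>
    kip K c (\<lambda>y. s * d y + t * e y) = s * kip K c d + t * kip K c e"
proof -
  assume "finite_supp d" "finite_supp e"
  then have "kfun K (\<lambda>y. s * d y + t * e y) = (\<lambda>x. s * kfun K d x + t * kfun K e x)"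
    by (intro ext kfun_lin)
  then show ?thesis unfolding kip_eq_pairing by (simp add: pairing_lin_right)
qed

lemma kip_diff_right: "finite_supp d \<Longrightarrow> finite_supp e \<Longrightarrow> kip K c (\<lambda>y. d y - e y) = kip K c d - kip K c e"
  using kip_lin_right[of d e K c 1 "-1"] by simp

lemma kip_commute:
  assumes "stationary_pd_kernel K"
  shows "kip K c d = kip K d c"
proof -
  have even: "K (y - z) = K (z - y)" for y z
    using assms unfolding stationary_pd_kernel_def by (metis minus_diff_eq)
  show ?thesis unfolding kip_def by (subst sum.swap) (simp add: even mult.commute)
qed

lemma kip_nonneg:
  assumes "stationary_pd_kernel K" "finite_supp c"
  shows "0 \<le> kip K c c"
proof (cases "\<exists>y. c y \<noteq> 0")
  case True
  then show ?thesis using assms unfolding stationary_pd_kernel_def by (auto intro: less_imp_le)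
qed (simp add: kip_def)

lemma kip_indicator: "kip K (indicator {x}) (indicator {x}) = K 0"
  unfolding kip_eq_pairing pairing_indicator kfun_eq_pairing by simp

lemma kernel_at_zero_pos:
  assumes "stationary_pd_kernel K"
  shows "0 < K 0"
proof -
  have "finite_supp (indicator {0} :: _ \<Rightarrow> real)" "indicator {0} 0 \<noteq> (0::real)" by simp_all
  then have "0 < kip K (indicator {0}) (indicator {0})"
    using assms unfolding stationary_pd_kernel_def by blast
  then show ?thesis by (simp only: kip_indicator)
qed

lemma kip_lin_self:
  assumes "stationary_pd_kernel K" "finite_supp c" "finite_supp d"
  shows "kip K (\<lambda>y. s * c y + t * d y) (\<lambda>y. s * c y + t * d y)
           = s^2 * kip K c c + 2 * s * t * kip K c d + t^2 * kip K d d"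
  using assms by (simp add: kip_lin_left kip_lin_right finite_supp_lin kip_commute[of K d c]
      algebra_simps power2_eq_square)

lemma kip_add_self:
  "stationary_pd_kernel K \<Longrightarrow> finite_supp c \<Longrightarrow> finite_supp d \<Longrightarrow>
    kip K (\<lambda>y. c y + d y) (\<lambda>y. c y + d y) = kip K c c + 2 * kip K c d + kip K d d"
  using kip_lin_self[of K c d 1 1] by simp

lemma kip_diff_self:
  "stationary_pd_kernel K \<Longrightarrow> finite_supp c \<Longrightarrow> finite_supp d \<Longrightarrow>
    kip K (\<lambda>y. c y - d y) (\<lambda>y. c y - d y) = kip K c c - 2 * kip K c d + kip K d d"
  using kip_lin_self[of K c d 1 "-1"] by simp

lemma quadratic_nonneg_discriminant:
  fixes a b q :: real
  assumes "0 \<le> a" "0 \<le> q" "\<And>t. 0 \<le> a + 2 * t * b + t^2 * q"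
  shows "b^2 \<le> a * q"
proof (cases "q = 0")
  case True
  have "0 \<le> a + 2 * (-(a+1)/(2*b)) * b + (-(a+1)/(2*b))^2 * q" by (rule assms(3))
  with True assms(1) show ?thesis by (cases "b = 0") (simp_all add: field_simps)
next
  case False
  then have q: "q > 0" using assms by auto
  have "0 \<le> a + 2 * (-b/q) * b + (-b/q)^2 * q" by (rule assms(3))
  then have "0 \<le> a - b^2 / q" using q by (simp add: field_simps power2_eq_square)
  then show ?thesis using q by (simp add: field_simps)
qed

lemma kip_Cauchy_Schwarz:
  assumes "stationary_pd_kernel K" "finite_supp c" "finite_supp d"
  shows "(kip K c d)^2 \<le> kip K c c * kip K d d"
proof (rule quadratic_nonneg_discriminant)
  show "0 \<le> kip K c c" "0 \<le> kip K d d" using kip_nonneg assms by auto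
  show "0 \<le> kip K c c + 2 * t * kip K c d + t^2 * kip K d d" for t
    using kip_nonneg[OF assms(1) finite_supp_lin[OF assms(2,3), of 1 t]] kip_lin_self[OF assms, of 1 t]
    by simp
qed

lemma abs_kip_le:
  assumes "stationary_pd_kernel K" "finite_supp c" "finite_supp d"
  shows "\<bar>kip K c d\<bar> \<le> sqrt (kip K c c) * sqrt (kip K d d)"
  using real_sqrt_le_mono[OF kip_Cauchy_Schwarz[OF assms]] by (simp add: real_sqrt_mult)

lemma kfun_square_le:
  assumes "stationary_pd_kernel K" "finite_supp c"
  shows "(kfun K c x)^2 \<le> K 0 * kip K c c"
proof -
  have "finite_supp (indicator {x} :: _ \<Rightarrow> real)" by simp
  moreover have "kip K (indicator {x}) c = kfun K c x"
    unfolding kip_eq_pairing pairing_indicator ..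
  ultimately show ?thesis using kip_Cauchy_Schwarz[OF assms(1) _ assms(2), of "indicator {x}"]
    by (simp add: kip_indicator)
qed

lemma abs_sqrt_kip_diff_le:
  assumes "stationary_pd_kernel K" "finite_supp c" "finite_supp d"
  shows "\<bar>sqrt (kip K c c) - sqrt (kip K d d)\<bar> \<le> sqrt (kip K (\<lambda>y. c y - d y) (\<lambda>y. c y - d y))"
proof -
  have "(sqrt (kip K c c) - sqrt (kip K d d))^2
      = kip K c c - 2 * (sqrt (kip K c c) * sqrt (kip K d d)) + kip K d d"
    using kip_nonneg[OF assms(1)] assms(2,3) by (simp add: power2_diff)
  then have "(sqrt (kip K c c) - sqrt (kip K d d))^2 \<le> kip K c c - 2 * kip K c d + kip K d d"
    using abs_le_D1[OF abs_kip_le[OF assms]] by linarith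
  then show ?thesis unfolding kip_diff_self[OF assms, symmetric] by (intro real_le_rsqrt) (simp only: power2_abs)
qed

lemma kip_diff_self_le:
  assumes "stationary_pd_kernel K" "finite_supp c" "finite_supp d"
  shows "kip K (\<lambda>y. c y - d y) (\<lambda>y. c y - d y) \<le> 2 * kip K c c + 2 * kip K d d"
  using kip_diff_self[OF assms] kip_add_self[OF assms] kip_nonneg[OF assms(1) finite_supp_add[OF assms(2,3)]]
  by linarith

section \<open>The native norm\<close>

definition kernel_Cauchy :: "('a::ab_group_add \<Rightarrow> real) \<Rightarrow> (nat \<Rightarrow> 'a \<Rightarrow> real) \<Rightarrow> bool" where
  "kernel_Cauchy K c \<longleftrightarrow>
     (\<forall>e>0. \<exists>N. \<forall>i\<ge>N. \<forall>j\<ge>N. kip K (\<lambda>y. c i y - c j y) (\<lambda>y. c i y - c j y) < e)"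

lemma native_approxD:
  assumes "native_approx K \<Omega> c f"
  shows "fin_coeffs \<Omega> (c j)" "finite_supp (c j)" "kernel_Cauchy K c"
    and "x \<in> \<Omega> \<Longrightarrow> (\<lambda>j. kfun K (c j) x) \<longlonglongrightarrow> f x"
  using assms unfolding native_approx_def kernel_Cauchy_def fin_coeffs_def by auto

lemma fin_coeffs_diff:
  assumes "fin_coeffs \<Omega> c" "fin_coeffs \<Omega> d"
  shows "fin_coeffs \<Omega> (\<lambda>y. c y - d y)"
proof -
  have "{y. c y - d y \<noteq> 0} \<subseteq> {y. c y \<noteq> 0} \<union> {y. d y \<noteq> 0}" by auto
  then show ?thesis using assms finite_supp_diff[of c d] unfolding fin_coeffs_def by blast
qed

lemma kernel_Cauchy_norm_convergent:
  assumes K: "stationary_pd_kernel K" and fin: "\<And>j. finite_supp (c j)" and c: "kernel_Cauchy K c"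
  shows "convergent (\<lambda>j. sqrt (kip K (c j) (c j)))"
proof -
  have "Cauchy (\<lambda>j. sqrt (kip K (c j) (c j)))"
  proof (rule metric_CauchyI)
    fix e :: real assume "0 < e"
    then obtain N where N: "\<forall>i\<ge>N. \<forall>j\<ge>N. kip K (\<lambda>y. c i y - c j y) (\<lambda>y. c i y - c j y) < e^2"
      using c unfolding kernel_Cauchy_def by (meson zero_less_power)
    have "dist (sqrt (kip K (c i) (c i))) (sqrt (kip K (c j) (c j))) < e" if "N \<le> i" "N \<le> j" for i j
    proof -
      have "sqrt (kip K (\<lambda>y. c i y - c j y) (\<lambda>y. c i y - c j y)) < sqrt (e^2)"
        using N that by (simp only: real_sqrt_less_mono)
      then have "sqrt (kip K (\<lambda>y. c i y - c j y) (\<lambda>y. c i y - c j y)) < e"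
        using \<open>0 < e\<close> by simp
      then show ?thesis using abs_sqrt_kip_diff_le[OF K fin fin, of i j] by (simp add: dist_real_def)
    qed
    then show "\<exists>N. \<forall>i\<ge>N. \<forall>j\<ge>N. dist (sqrt (kip K (c i) (c i))) (sqrt (kip K (c j) (c j))) < e"
      by blast
  qed
  then show ?thesis by (simp add: Cauchy_convergent_iff)
qed

lemma kernel_Cauchy_diff:
  assumes K: "stationary_pd_kernel K" and fin: "\<And>j. finite_supp (c j)" "\<And>j. finite_supp (d j)"
    and "kernel_Cauchy K c" "kernel_Cauchy K d"
  shows "kernel_Cauchy K (\<lambda>j y. c j y - d j y)"
  unfolding kernel_Cauchy_def
proof (intro allI impI)
  fix e :: real assume "0 < e"
  then obtain N1 N2 where
    N1: "\<forall>i\<ge>N1. \<forall>j\<ge>N1. kip K (\<lambda>y. c i y - c j y) (\<lambda>y. c i y - c j y) < e/4" and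
    N2: "\<forall>i\<ge>N2. \<forall>j\<ge>N2. kip K (\<lambda>y. d i y - d j y) (\<lambda>y. d i y - d j y) < e/4"
    using assms(4,5) unfolding kernel_Cauchy_def by (meson zero_less_divide_iff zero_less_numeral)
  have "kip K (\<lambda>y. (c i y - d i y) - (c j y - d j y)) (\<lambda>y. (c i y - d i y) - (c j y - d j y)) < e"
    if "max N1 N2 \<le> i" "max N1 N2 \<le> j" for i j
  proof -
    have "(\<lambda>y. (c i y - d i y) - (c j y - d j y)) = (\<lambda>y. (c i y - c j y) - (d i y - d j y))"
      by (auto simp: algebra_simps)
    then show ?thesis
      using kip_diff_self_le[OF K finite_supp_diff[OF fin(1) fin(1)] finite_supp_diff[OF fin(2) fin(2)], of i j i j]
        N1 N2 that by fastforce
  qed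
  then show "\<exists>N. \<forall>i\<ge>N. \<forall>j\<ge>N.
      kip K (\<lambda>y. (c i y - d i y) - (c j y - d j y)) (\<lambda>y. (c i y - d i y) - (c j y - d j y)) < e"
    by blast
qed

text \<open>The completion argument: \<open>\<langle>e\<^sub>j, e\<^sub>j\<rangle> = \<langle>e\<^sub>j, e\<^sub>j - e\<^sub>N\<rangle> + \<langle>e\<^sub>N, e\<^sub>j\<rangle>\<close>, where the first
  term is small by the Cauchy property and the second tends to \<open>0\<close> by pointwise convergence
  on the finite support of \<open>e\<^sub>N\<close>.\<close>
lemma kernel_Cauchy_pointwise_zero:
  assumes K: "stationary_pd_kernel K" and fc: "\<And>j. fin_coeffs \<Omega> (e j)" and "kernel_Cauchy K e"
    and lim: "\<And>y. y \<in> \<Omega> \<Longrightarrow> (\<lambda>j. kfun K (e j) y) \<longlonglongrightarrow> 0"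
  shows "(\<lambda>j. kip K (e j) (e j)) \<longlonglongrightarrow> 0"
proof -
  have fin: "finite_supp (e j)" and supp: "{y. e j y \<noteq> 0} \<subseteq> \<Omega>" for j
    using fc unfolding fin_coeffs_def by auto
  define s where "s j = sqrt (kip K (e j) (e j))" for j
  obtain l where l: "s \<longlonglongrightarrow> l"
    using kernel_Cauchy_norm_convergent[OF K fin assms(3)] unfolding s_def convergent_def by auto
  have s_nonneg: "0 \<le> s j" and sq: "kip K (e j) (e j) = (s j)^2" for j
    using kip_nonneg[OF K fin] by (simp_all add: s_def)
  have "l = 0"
  proof (rule ccontr)
    assume "l \<noteq> 0"
    with LIMSEQ_le_const[OF l] s_nonneg have "l > 0" by force
    then obtain N where N: "\<forall>i\<ge>N. \<forall>j\<ge>N. kip K (\<lambda>y. e i y - e j y) (\<lambda>y. e i y - e j y) < (l/2)^2"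
      using assms(3) unfolding kernel_Cauchy_def by (meson half_gt_zero zero_less_power)
    have "(\<lambda>j. kip K (e N) (e j)) \<longlonglongrightarrow> 0"
      unfolding kip_eq_pairing pairing_def
      by (intro tendsto_null_sum tendsto_mult_right_zero lim) (use supp in auto)
    then have upper: "(\<lambda>j. s j * (l/2) + kip K (e N) (e j)) \<longlonglongrightarrow> l * (l/2) + 0"
      by (intro tendsto_add tendsto_mult_right l)
    have "(s j)^2 \<le> s j * (l/2) + kip K (e N) (e j)" if "N \<le> j" for j
    proof -
      have "sqrt (kip K (\<lambda>y. e j y - e N y) (\<lambda>y. e j y - e N y)) < sqrt ((l/2)^2)"
        using N that by (simp only: real_sqrt_less_mono)
      then have "sqrt (kip K (\<lambda>y. e j y - e N y) (\<lambda>y. e j y - e N y)) \<le> l/2"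
        using \<open>l > 0\<close> by simp
      then have "kip K (e j) (\<lambda>y. e j y - e N y) \<le> s j * (l/2)"
        using abs_le_D1[OF abs_kip_le[OF K fin finite_supp_diff[OF fin fin]], of j j N] s_nonneg[of j]
        unfolding s_def by (meson mult_left_mono order_trans)
      then show ?thesis
        using sq[of j] kip_diff_right[OF fin fin, of K "e j" j N] kip_commute[OF K, of "e j" "e N"] by simp
    qed
    then have "l^2 \<le> l * (l/2) + 0"
      by (intro LIMSEQ_le[OF tendsto_power[OF l] upper]) auto
    then show False using \<open>l > 0\<close> by (simp add: power2_eq_square)
  qed
  then show ?thesis using tendsto_power[OF l, of 2] sq by simp
qed

lemma native_approx_same_norm_limit:
  assumes K: "stationary_pd_kernel K"
    and c: "native_approx K \<Omega> c f" "(\<lambda>j. sqrt (kip K (c j) (c j))) \<longlonglongrightarrow> r"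
    and d: "native_approx K \<Omega> d f" "(\<lambda>j. sqrt (kip K (d j) (d j))) \<longlonglongrightarrow> r'"
  shows "r = r'"
proof -
  note c_props = native_approxD[OF c(1)] and d_props = native_approxD[OF d(1)]
  have "(\<lambda>j. kfun K (\<lambda>y. c j y - d j y) x) \<longlonglongrightarrow> 0" if "x \<in> \<Omega>" for x
    using tendsto_diff[OF c_props(4) d_props(4), OF that that]
    by (simp add: kfun_diff[OF c_props(2) d_props(2)])
  then have "(\<lambda>j. kip K (\<lambda>y. c j y - d j y) (\<lambda>y. c j y - d j y)) \<longlonglongrightarrow> 0"
    using kernel_Cauchy_pointwise_zero[OF K fin_coeffs_diff[OF c_props(1) d_props(1)]
        kernel_Cauchy_diff[OF K c_props(2) d_props(2) c_props(3) d_props(3)]] by blast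
  then have "(\<lambda>j. sqrt (kip K (\<lambda>y. c j y - d j y) (\<lambda>y. c j y - d j y))) \<longlonglongrightarrow> 0"
    using tendsto_real_sqrt by force
  then have "(\<lambda>j. sqrt (kip K (c j) (c j)) - sqrt (kip K (d j) (d j))) \<longlonglongrightarrow> 0"
    by (rule Lim_null_comparison[rotated])
       (simp add: abs_sqrt_kip_diff_le[OF K c_props(2) d_props(2)])
  moreover have "(\<lambda>j. sqrt (kip K (c j) (c j)) - sqrt (kip K (d j) (d j))) \<longlonglongrightarrow> r - r'"
    by (intro tendsto_diff c(2) d(2))
  ultimately show ?thesis using LIMSEQ_unique by fastforce
qed

lemma native_norm_LIMSEQ:
  assumes K: "stationary_pd_kernel K" and c: "native_approx K \<Omega> c f"
  shows "(\<lambda>j. sqrt (kip K (c j) (c j))) \<longlonglongrightarrow> native_norm K \<Omega> f"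
proof -
  obtain r where r: "(\<lambda>j. sqrt (kip K (c j) (c j))) \<longlonglongrightarrow> r"
    using kernel_Cauchy_norm_convergent[OF K native_approxD(2,3)[OF c]] unfolding convergent_def by blast
  have "native_norm K \<Omega> f = r"
    unfolding native_norm_def
  proof (rule the_equality)
    show "\<exists>c. native_approx K \<Omega> c f \<and> (\<lambda>j. sqrt (kip K (c j) (c j))) \<longlonglongrightarrow> r"
      using c r by blast
  next
    fix r' assume "\<exists>d. native_approx K \<Omega> d f \<and> (\<lambda>j. sqrt (kip K (d j) (d j))) \<longlonglongrightarrow> r'"
    then show "r' = r" using native_approx_same_norm_limit[OF K _ _ c r] by blast
  qed
  then show ?thesis using r by simp
qed

lemma native_approx_const:
  assumes "fin_coeffs \<Omega> c"
  shows "native_approx K \<Omega> (\<lambda>_. c) (kfun K c)"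
  unfolding native_approx_def
proof (intro conjI allI impI ballI)
  show "fin_coeffs \<Omega> c" by (rule assms)
  show "(\<lambda>j. kfun K c x) \<longlonglongrightarrow> kfun K c x" for x by simp
  fix e :: real assume "0 < e"
  then show "\<exists>N. \<forall>i\<ge>N. \<forall>j\<ge>N. kip K (\<lambda>y. c y - c y) (\<lambda>y. c y - c y) < e"
    by (simp add: kip_def)
qed

lemma kfun_in_native_space: "fin_coeffs \<Omega> c \<Longrightarrow> kfun K c \<in> native_space K \<Omega>"
  unfolding native_space_def using native_approx_const by blast

lemma native_norm_kfun:
  assumes "stationary_pd_kernel K" "fin_coeffs \<Omega> c"
  shows "native_norm K \<Omega> (kfun K c) = sqrt (kip K c c)"
  using native_norm_LIMSEQ[OF assms(1) native_approx_const[OF assms(2)]] by (simp add: LIMSEQ_const_iff)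

lemma native_space_pairing_bound:
  assumes K: "stationary_pd_kernel K" and f: "f \<in> native_space K \<Omega>" and d: "fin_coeffs \<Omega> d"
  shows "(pairing d f)^2 \<le> kip K d d * (native_norm K \<Omega> f)^2"
proof -
  obtain c where c: "native_approx K \<Omega> c f" using f unfolding native_space_def by blast
  have fin_d: "finite_supp d" and supp_d: "{y. d y \<noteq> 0} \<subseteq> \<Omega>" using d unfolding fin_coeffs_def by auto
  have lim_pairing: "(\<lambda>j. (kip K d (c j))^2) \<longlonglongrightarrow> (pairing d f)^2"
    unfolding kip_eq_pairing pairing_def
    by (intro tendsto_intros native_approxD(4)[OF c]) (use supp_d in auto)
  have lim_bound: "(\<lambda>j. kip K d d * (sqrt (kip K (c j) (c j)))^2) \<longlonglongrightarrow> kip K d d * (native_norm K \<Omega> f)^2"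
    by (intro tendsto_intros native_norm_LIMSEQ[OF K c])
  have "(kip K d (c j))^2 \<le> kip K d d * (sqrt (kip K (c j) (c j)))^2" for j
    using kip_Cauchy_Schwarz[OF K fin_d native_approxD(2)[OF c]] kip_nonneg[OF K native_approxD(2)[OF c]]
    by simp
  then show ?thesis by (intro LIMSEQ_le[OF lim_pairing lim_bound]) simp
qed

section \<open>Kernel ridge regression and the GP predictor\<close>

definition design_coeffs :: "('n::finite \<Rightarrow> 'a) \<Rightarrow> real^'n \<Rightarrow> 'a \<Rightarrow> real" where
  "design_coeffs X a y = (\<Sum>k\<in>UNIV. if X k = y then a$k else 0)"

lemma supp_design_coeffs: "{y. design_coeffs X a y \<noteq> 0} \<subseteq> range X"
proof -
  have "design_coeffs X a y = 0" if "y \<notin> range X" for y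
  proof -
    have "X k \<noteq> y" for k using that by auto
    then show ?thesis unfolding design_coeffs_def by simp
  qed
  then show ?thesis by blast
qed

lemma finite_supp_design_coeffs: "finite_supp (design_coeffs X a)"
  by (rule finite_subset[OF supp_design_coeffs]) simp

lemma fin_coeffs_design_coeffs:
  assumes "\<forall>k. X k \<in> \<Omega>"
  shows "fin_coeffs \<Omega> (design_coeffs X a)"
proof -
  have "{y. design_coeffs X a y \<noteq> 0} \<subseteq> \<Omega>" using supp_design_coeffs[of X a] assms by auto
  then show ?thesis unfolding fin_coeffs_def using finite_supp_design_coeffs by simp
qed

lemma pairing_design_coeffs:
  assumes "inj X"
  shows "pairing (design_coeffs X a) g = (\<Sum>k\<in>UNIV. a$k * g (X k))"
proof -
  have at_design: "design_coeffs X a (X k) = a$k" for k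
    using assms by (simp add: design_coeffs_def inj_eq)
  have "pairing (design_coeffs X a) g = (\<Sum>y\<in>range X. design_coeffs X a y * g y)"
    by (rule pairing_superset[OF _ supp_design_coeffs]) simp
  also have "\<dots> = (\<Sum>k\<in>UNIV. a$k * g (X k))"
    by (simp add: sum.reindex[OF assms] at_design)
  finally show ?thesis .
qed

lemma kfun_design_coeffs: "inj X \<Longrightarrow> kfun K (design_coeffs X a) z = (\<Sum>k\<in>UNIV. a$k * K (z - X k))"
  unfolding kfun_eq_pairing by (rule pairing_design_coeffs)

lemma kip_design_coeffs: "inj X \<Longrightarrow> kip K (design_coeffs X a) d = (\<Sum>k\<in>UNIV. a$k * kfun K d (X k))"
  unfolding kip_eq_pairing by (rule pairing_design_coeffs)

definition reg_gram :: "('a::ab_group_add \<Rightarrow> real) \<Rightarrow> ('n::finite \<Rightarrow> 'a) \<Rightarrow> real \<Rightarrow> real^'n^'n" where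
  "reg_gram \<Phi> X \<mu> = (\<chi> j k. \<Phi> (X j - X k)) + \<mu> *\<^sub>R mat 1"

lemma reg_gram_mult_vec: "(reg_gram \<Phi> X \<mu> *v v)$j = (\<Sum>k\<in>UNIV. \<Phi> (X j - X k) * v$k) + \<mu> * v$j"
proof -
  have "(reg_gram \<Phi> X \<mu> *v v)$j = (\<Sum>k\<in>UNIV. \<Phi> (X j - X k) * v$k + (if j = k then \<mu> * v$k else 0))"
    unfolding reg_gram_def matrix_vector_mult_def mat_def by (auto intro!: sum.cong simp: algebra_simps)
  then show ?thesis by (simp add: sum.distrib)
qed

lemma reg_gram_invertible:
  assumes K: "stationary_pd_kernel \<Phi>" and X: "inj X" and "\<mu> > 0"
  shows "invertible (reg_gram \<Phi> X \<mu>)"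
proof -
  have "v = 0" if "reg_gram \<Phi> X \<mu> *v v = 0" for v
  proof -
    have "0 = (\<Sum>j\<in>UNIV. v$j * (reg_gram \<Phi> X \<mu> *v v)$j)" using that by simp
    also have "\<dots> = kip \<Phi> (design_coeffs X v) (design_coeffs X v) + \<mu> * (\<Sum>j\<in>UNIV. (v$j)^2)"
      unfolding reg_gram_mult_vec kip_design_coeffs[OF X] kfun_design_coeffs[OF X]
      by (simp add: algebra_simps sum.distrib sum_distrib_left power2_eq_square)
    finally have "\<mu> * (\<Sum>j\<in>UNIV. (v$j)^2) \<le> 0"
      using kip_nonneg[OF K finite_supp_design_coeffs, of X v] by linarith
    then have "(\<Sum>j\<in>UNIV. (v$j)^2) = 0"
      using \<open>\<mu> > 0\<close> by (simp add: mult_le_0_iff sum_nonneg antisym)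
    then show "v = 0" by (simp add: sum_nonneg_eq_0_iff vec_eq_iff)
  qed
  then obtain B where "B ** reg_gram \<Phi> X \<mu> = mat 1" using matrix_left_invertible_ker by blast
  then show ?thesis unfolding invertible_def using matrix_left_right_inverse by blast
qed

lemma invertible_mult_matrix_inv:
  assumes "invertible (A::real^'n^'n)"
  shows "A *v (matrix_inv A *v y) = y"
proof -
  have "A ** matrix_inv A = mat 1"
    using someI_ex[OF assms[unfolded invertible_def]] unfolding matrix_inv_def by blast
  then show ?thesis by (simp add: matrix_vector_mul_assoc)
qed

definition ridge_solution :: "('a::ab_group_add \<Rightarrow> real) \<Rightarrow> ('n::finite \<Rightarrow> 'a) \<Rightarrow> real \<Rightarrow> ('n \<Rightarrow> real) \<Rightarrow> real^'n" where
  "ridge_solution \<Phi> X \<mu> y = matrix_inv (reg_gram \<Phi> X \<mu>) *v (\<chi> k. y k)"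

lemma ridge_solution_residual:
  assumes "stationary_pd_kernel \<Phi>" "inj X" "\<mu> > 0"
  shows "y k - kfun \<Phi> (design_coeffs X (ridge_solution \<Phi> X \<mu> y)) (X k) = \<mu> * ridge_solution \<Phi> X \<mu> y $ k"
proof -
  have "(reg_gram \<Phi> X \<mu> *v ridge_solution \<Phi> X \<mu> y) $ k = y k"
    unfolding ridge_solution_def invertible_mult_matrix_inv[OF reg_gram_invertible[OF assms]] by simp
  then show ?thesis
    unfolding reg_gram_mult_vec kfun_design_coeffs[OF assms(2)] by (simp add: mult.commute)
qed

definition krr_coeff_obj :: "('a::ab_group_add \<Rightarrow> real) \<Rightarrow> ('n::finite \<Rightarrow> 'a) \<Rightarrow> ('n \<Rightarrow> real) \<Rightarrow> real \<Rightarrow> ('a \<Rightarrow> real) \<Rightarrow> real" where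
  "krr_coeff_obj \<Phi> X y lam c =
     (1 / real CARD('n)) * (\<Sum>k\<in>UNIV. (y k - kfun \<Phi> c (X k))^2) + lam * kip \<Phi> c c"

text \<open>Since the residuals of the ridge solution are \<open>\<mu> a\<^sub>k\<close> and \<open>lam = \<mu> / n\<close>, the cross terms
  of the data fit and of the penalty cancel.\<close>
lemma krr_coeff_obj_excess:
  fixes X :: "'n::finite \<Rightarrow> 'a::ab_group_add" and y :: "'n \<Rightarrow> real"
  assumes K: "stationary_pd_kernel \<Phi>" and X: "inj X" and "\<mu> > 0" and lam: "lam = \<mu> / real CARD('n)"
    and c: "finite_supp c"
  defines "cs \<equiv> design_coeffs X (ridge_solution \<Phi> X \<mu> y)"
  shows "krr_coeff_obj \<Phi> X y lam cs + lam * kip \<Phi> (\<lambda>z. c z - cs z) (\<lambda>z. c z - cs z)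
           \<le> krr_coeff_obj \<Phi> X y lam c"
proof -
  define a where "a = ridge_solution \<Phi> X \<mu> y"
  define e where "e = (\<lambda>z. c z - cs z)"
  define E where "E k = kfun \<Phi> e (X k)" for k
  define m where "m = 1 / real CARD('n)"
  have cs: "finite_supp cs" unfolding cs_def by (rule finite_supp_design_coeffs)
  have e: "finite_supp e" unfolding e_def by (rule finite_supp_diff[OF c cs])
  have c_eq: "c = (\<lambda>z. cs z + e z)" by (simp add: e_def)
  have res: "y k - kfun \<Phi> cs (X k) = \<mu> * a$k" for k
    unfolding cs_def a_def by (rule ridge_solution_residual[OF K X \<open>\<mu> > 0\<close>])
  have fit: "y k - kfun \<Phi> c (X k) = \<mu> * a$k - E k" for k
    using res[of k] unfolding E_def by (subst c_eq) (simp add: kfun_add[OF cs e])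
  have "kip \<Phi> cs e = (\<Sum>k\<in>UNIV. a$k * E k)"
    unfolding cs_def a_def E_def by (rule kip_design_coeffs[OF X])
  then have pen: "kip \<Phi> c c = kip \<Phi> cs cs + 2 * (\<Sum>k\<in>UNIV. a$k * E k) + kip \<Phi> e e"
    using kip_add_self[OF K cs e] c_eq by simp
  have sq: "(\<Sum>k\<in>UNIV. (\<mu> * a$k - E k)^2)
      = (\<Sum>k\<in>UNIV. (\<mu> * a$k)^2) - 2 * \<mu> * (\<Sum>k\<in>UNIV. a$k * E k) + (\<Sum>k\<in>UNIV. (E k)^2)"
    by (simp add: power2_diff sum.distrib sum_subtractf sum_distrib_left algebra_simps)
  have lam_m: "lam = m * \<mu>" unfolding lam m_def by simp
  have "krr_coeff_obj \<Phi> X y lam c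
      = krr_coeff_obj \<Phi> X y lam cs + m * (\<Sum>k\<in>UNIV. (E k)^2) + lam * kip \<Phi> e e"
    unfolding krr_coeff_obj_def fit res pen sq m_def[symmetric] lam_m by (simp add: algebra_simps)
  moreover have "0 \<le> m * (\<Sum>k\<in>UNIV. (E k)^2)" unfolding m_def by (simp add: sum_nonneg)
  ultimately show ?thesis unfolding e_def by linarith
qed

lemma krr_coeff_obj_LIMSEQ:
  fixes X :: "'n::finite \<Rightarrow> 'a::ab_group_add"
  assumes K: "stationary_pd_kernel \<Phi>" and X\<Omega>: "\<forall>k. X k \<in> \<Omega>" and c: "native_approx \<Phi> \<Omega> c h"
  shows "(\<lambda>j. krr_coeff_obj \<Phi> X y lam (c j)) \<longlonglongrightarrow> krr_obj \<Phi> \<Omega> X y lam h"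
proof -
  have "krr_coeff_obj \<Phi> X y lam (c j) = (1 / real CARD('n)) * (\<Sum>k\<in>UNIV. (y k - kfun \<Phi> (c j) (X k))^2)
      + lam * (sqrt (kip \<Phi> (c j) (c j)))^2" for j
    using kip_nonneg[OF K native_approxD(2)[OF c]] by (simp add: krr_coeff_obj_def)
  moreover have "(\<lambda>j. (1 / real CARD('n)) * (\<Sum>k\<in>UNIV. (y k - kfun \<Phi> (c j) (X k))^2)
      + lam * (sqrt (kip \<Phi> (c j) (c j)))^2) \<longlonglongrightarrow> krr_obj \<Phi> \<Omega> X y lam h"
    unfolding krr_obj_def
    by (intro tendsto_intros native_approxD(4)[OF c] native_norm_LIMSEQ[OF K c] X\<Omega>[rule_format])
  ultimately show ?thesis by simp
qed

lemma krr_obj_kfun: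
  assumes "stationary_pd_kernel \<Phi>" "fin_coeffs \<Omega> c"
  shows "krr_obj \<Phi> \<Omega> X y lam (kfun \<Phi> c) = krr_coeff_obj \<Phi> X y lam c"
  using kip_nonneg[OF assms(1), of c] assms(2)
  unfolding krr_obj_def krr_coeff_obj_def native_norm_kfun[OF assms] fin_coeffs_def by simp

lemma ridge_solution_minimises_krr_obj:
  fixes X :: "'n::finite \<Rightarrow> 'a::ab_group_add"
  assumes K: "stationary_pd_kernel \<Phi>" and X: "inj X" and X\<Omega>: "\<forall>k. X k \<in> \<Omega>"
    and \<mu>: "\<mu> > 0" and lam: "lam = \<mu> / real CARD('n)" and h: "h \<in> native_space \<Phi> \<Omega>"
  shows "krr_obj \<Phi> \<Omega> X y lam (kfun \<Phi> (design_coeffs X (ridge_solution \<Phi> X \<mu> y))) \<le> krr_obj \<Phi> \<Omega> X y lam h"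
proof -
  let ?cs = "design_coeffs X (ridge_solution \<Phi> X \<mu> y)"
  obtain c where c: "native_approx \<Phi> \<Omega> c h" using h unfolding native_space_def by blast
  note fin = native_approxD(2)[OF c]
  have "krr_coeff_obj \<Phi> X y lam ?cs \<le> krr_coeff_obj \<Phi> X y lam (c j)" for j
  proof -
    have "0 \<le> lam" using \<mu> lam by simp
    then have "0 \<le> lam * kip \<Phi> (\<lambda>z. c j z - ?cs z) (\<lambda>z. c j z - ?cs z)"
      by (rule mult_nonneg_nonneg[OF _ kip_nonneg[OF K finite_supp_diff[OF fin finite_supp_design_coeffs]]])
    then show ?thesis using krr_coeff_obj_excess[OF K X \<mu> lam fin, of y j] by linarith
  qed
  then show ?thesis
    unfolding krr_obj_kfun[OF K fin_coeffs_design_coeffs[OF X\<Omega>]]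
    by (intro LIMSEQ_le_const[OF krr_coeff_obj_LIMSEQ[OF K X\<Omega> c]]) simp
qed

lemma krr_minimises:
  fixes X :: "'n::finite \<Rightarrow> 'a::ab_group_add"
  assumes "stationary_pd_kernel \<Phi>" "inj X" and X\<Omega>: "\<forall>k. X k \<in> \<Omega>"
    and "\<mu> > 0" "lam = \<mu> / real CARD('n)"
  shows "krr \<Phi> \<Omega> X y lam \<in> native_space \<Phi> \<Omega>"
    and "h \<in> native_space \<Phi> \<Omega> \<Longrightarrow> krr_obj \<Phi> \<Omega> X y lam (krr \<Phi> \<Omega> X y lam) \<le> krr_obj \<Phi> \<Omega> X y lam h"
proof -
  let ?gs = "kfun \<Phi> (design_coeffs X (ridge_solution \<Phi> X \<mu> y))"
  have "?gs \<in> native_space \<Phi> \<Omega>" by (rule kfun_in_native_space[OF fin_coeffs_design_coeffs[OF X\<Omega>]])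
  then have "\<exists>g. g \<in> native_space \<Phi> \<Omega> \<and> (\<forall>h\<in>native_space \<Phi> \<Omega>. krr_obj \<Phi> \<Omega> X y lam g \<le> krr_obj \<Phi> \<Omega> X y lam h)"
    using ridge_solution_minimises_krr_obj[OF assms] by blast
  then have "krr \<Phi> \<Omega> X y lam \<in> native_space \<Phi> \<Omega> \<and>
      (\<forall>h\<in>native_space \<Phi> \<Omega>. krr_obj \<Phi> \<Omega> X y lam (krr \<Phi> \<Omega> X y lam) \<le> krr_obj \<Phi> \<Omega> X y lam h)"
    unfolding krr_def by (rule someI_ex)
  then show "krr \<Phi> \<Omega> X y lam \<in> native_space \<Phi> \<Omega>"
    and "h \<in> native_space \<Phi> \<Omega> \<Longrightarrow> krr_obj \<Phi> \<Omega> X y lam (krr \<Phi> \<Omega> X y lam) \<le> krr_obj \<Phi> \<Omega> X y lam h"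
    by blast+
qed

lemma pointwise_error_le_krr_obj_excess:
  fixes X :: "'n::finite \<Rightarrow> 'a::ab_group_add" and y :: "'n \<Rightarrow> real"
  assumes K: "stationary_pd_kernel \<Phi>" and X: "inj X" and X\<Omega>: "\<forall>k. X k \<in> \<Omega>"
    and \<mu>: "\<mu> > 0" and lam: "lam = \<mu> / real CARD('n)"
    and h: "h \<in> native_space \<Phi> \<Omega>" and x: "x \<in> \<Omega>"
  defines "cs \<equiv> design_coeffs X (ridge_solution \<Phi> X \<mu> y)"
  shows "(h x - kfun \<Phi> cs x)^2 \<le> \<Phi> 0 / lam * (krr_obj \<Phi> \<Omega> X y lam h - krr_coeff_obj \<Phi> X y lam cs)"
proof -
  define T where "T = krr_coeff_obj \<Phi> X y lam"
  obtain c where c: "native_approx \<Phi> \<Omega> c h" using h unfolding native_space_def by blast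
  note fin = native_approxD(2)[OF c]
  have cs: "finite_supp cs" unfolding cs_def by (rule finite_supp_design_coeffs)
  have lam_pos: "lam > 0" using \<mu> lam by simp
  have lim_error: "(\<lambda>j. (kfun \<Phi> (c j) x - kfun \<Phi> cs x)^2) \<longlonglongrightarrow> (h x - kfun \<Phi> cs x)^2"
    by (intro tendsto_intros native_approxD(4)[OF c x])
  have lim_excess: "(\<lambda>j. \<Phi> 0 / lam * (T (c j) - T cs)) \<longlonglongrightarrow> \<Phi> 0 / lam * (krr_obj \<Phi> \<Omega> X y lam h - T cs)"
    unfolding T_def by (intro tendsto_intros krr_coeff_obj_LIMSEQ[OF K X\<Omega> c])
  have "(kfun \<Phi> (c j) x - kfun \<Phi> cs x)^2 \<le> \<Phi> 0 / lam * (T (c j) - T cs)" for j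
  proof -
    have "(kfun \<Phi> (c j) x - kfun \<Phi> cs x)^2 \<le> \<Phi> 0 * kip \<Phi> (\<lambda>z. c j z - cs z) (\<lambda>z. c j z - cs z)"
      unfolding kfun_diff[OF fin cs, symmetric] by (rule kfun_square_le[OF K finite_supp_diff[OF fin cs]])
    also have "\<dots> \<le> \<Phi> 0 * ((T (c j) - T cs) / lam)"
    proof (rule mult_left_mono)
      show "kip \<Phi> (\<lambda>z. c j z - cs z) (\<lambda>z. c j z - cs z) \<le> (T (c j) - T cs) / lam"
        using krr_coeff_obj_excess[OF K X \<mu> lam fin, of y j] lam_pos
        unfolding T_def cs_def by (simp add: pos_le_divide_eq mult.commute)
    qed (use kernel_at_zero_pos[OF K] in simp)
    also have "\<dots> = \<Phi> 0 / lam * (T (c j) - T cs)" by simp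
    finally show ?thesis .
  qed
  then show ?thesis unfolding T_def[symmetric] by (intro LIMSEQ_le[OF lim_error lim_excess]) simp
qed

lemma krr_eq_kfun_ridge_solution:
  fixes X :: "'n::finite \<Rightarrow> 'a::ab_group_add"
  assumes K: "stationary_pd_kernel \<Phi>" and "inj X" and X\<Omega>: "\<forall>k. X k \<in> \<Omega>"
    and \<mu>: "\<mu> > 0" and lam: "lam = \<mu> / real CARD('n)" and x: "x \<in> \<Omega>"
  shows "krr \<Phi> \<Omega> X y lam x = kfun \<Phi> (design_coeffs X (ridge_solution \<Phi> X \<mu> y)) x"
proof -
  let ?cs = "design_coeffs X (ridge_solution \<Phi> X \<mu> y)"
  let ?g = "krr \<Phi> \<Omega> X y lam"
  have "krr_obj \<Phi> \<Omega> X y lam ?g \<le> krr_coeff_obj \<Phi> X y lam ?cs"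
    using krr_minimises(2)[OF assms(1-5) kfun_in_native_space[OF fin_coeffs_design_coeffs[OF X\<Omega>]]]
    unfolding krr_obj_kfun[OF K fin_coeffs_design_coeffs[OF X\<Omega>]] .
  then have "\<Phi> 0 / lam * (krr_obj \<Phi> \<Omega> X y lam ?g - krr_coeff_obj \<Phi> X y lam ?cs) \<le> 0"
    using kernel_at_zero_pos[OF K] \<mu> lam by (simp add: mult_nonneg_nonpos divide_nonpos_pos)
  then have "(?g x - kfun \<Phi> ?cs x)^2 \<le> 0"
    using pointwise_error_le_krr_obj_excess[where y = y, OF assms(1-5) krr_minimises(1)[where y = y, OF assms(1-5)] x]
    by linarith
  then show ?thesis by simp
qed

lemma gp_pred_eq_kfun_ridge_solution:
  "inj X \<Longrightarrow> gp_pred \<Phi> X \<mu> (\<chi> k. y k) x = kfun \<Phi> (design_coeffs X (ridge_solution \<Phi> X \<mu> y)) x"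
  unfolding gp_pred_def kfun_design_coeffs ridge_solution_def reg_gram_def[symmetric] inner_vec_def
  by (simp add: mult.commute)

definition gp_weights :: "('a::ab_group_add \<Rightarrow> real) \<Rightarrow> ('n::finite \<Rightarrow> 'a) \<Rightarrow> real \<Rightarrow> 'a \<Rightarrow> real^'n" where
  "gp_weights \<Phi> X \<mu> x = (\<chi> j. \<Phi> (x - X j)) v* matrix_inv (reg_gram \<Phi> X \<mu>)"

lemma gp_pred_eq_sum: "gp_pred \<Phi> X \<mu> Y x = (\<Sum>k\<in>UNIV. gp_weights \<Phi> X \<mu> x $ k * Y $ k)"
  unfolding gp_pred_def gp_weights_def reg_gram_def[symmetric] dot_lmul_matrix[symmetric]
  by (simp add: inner_vec_def)

section \<open>Prediction errors\<close>

definition error_coeffs :: "('n::finite \<Rightarrow> 'a) \<Rightarrow> real^'n \<Rightarrow> 'a \<Rightarrow> 'a \<Rightarrow> real" where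
  "error_coeffs X w x y = indicator {x} y - design_coeffs X w y"

lemma pairing_error_coeffs:
  assumes "inj X"
  shows "pairing (error_coeffs X w x) g = g x - (\<Sum>k\<in>UNIV. w$k * g (X k))"
  using pairing_lin_left[of "indicator {x}" "design_coeffs X w" 1 "-1" g] finite_supp_design_coeffs[of X w]
  by (simp add: error_coeffs_def[abs_def] pairing_indicator pairing_design_coeffs[OF assms])

lemma fin_coeffs_error_coeffs:
  assumes "\<forall>k. X k \<in> \<Omega>" "x \<in> \<Omega>"
  shows "fin_coeffs \<Omega> (error_coeffs X w x)"
proof -
  have "fin_coeffs \<Omega> (indicator {x})" using assms(2) by (simp add: fin_coeffs_def)
  then show ?thesis
    unfolding error_coeffs_def[abs_def] by (rule fin_coeffs_diff[OF _ fin_coeffs_design_coeffs[OF assms(1)]])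
qed

lemma square_integrable_mult:
  fixes f g :: "'w \<Rightarrow> real"
  assumes "f \<in> borel_measurable M" "g \<in> borel_measurable M"
    and f2: "integrable M (\<lambda>x. (f x)^2)" and g2: "integrable M (\<lambda>x. (g x)^2)"
  shows "integrable M (\<lambda>x. f x * g x)"
proof (rule Bochner_Integration.integrable_bound[OF Bochner_Integration.integrable_add[OF f2 g2]])
  show "(\<lambda>x. f x * g x) \<in> borel_measurable M" using assms(1,2) by measurable
  have "\<bar>f x\<bar> * \<bar>g x\<bar> \<le> (f x)^2 + (g x)^2" for x
  proof -
    have "2 * \<bar>f x\<bar> * \<bar>g x\<bar> \<le> (f x)^2 + (g x)^2"
      using sum_squares_bound[of "\<bar>f x\<bar>" "\<bar>g x\<bar>"] by simp
    then show ?thesis using zero_le_mult_iff[of "\<bar>f x\<bar>" "\<bar>g x\<bar>"] by linarith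
  qed
  then show "AE x in M. norm (f x * g x) \<le> norm ((f x)^2 + (g x)^2)"
    by (simp add: abs_mult)
qed

lemma (in prob_space) second_moment_minus_weighted_noise:
  fixes \<epsilon> :: "'n::finite \<Rightarrow> 'a \<Rightarrow> real"
  assumes ind: "indep_vars (\<lambda>_. borel) \<epsilon> UNIV"
    and mean: "\<forall>k. integrable M (\<epsilon> k) \<and> (\<integral>\<omega>. \<epsilon> k \<omega> \<partial>M) = 0"
    and var: "\<forall>k. integrable M (\<lambda>\<omega>. (\<epsilon> k \<omega>)^2) \<and> (\<integral>\<omega>. (\<epsilon> k \<omega>)^2 \<partial>M) = \<sigma>^2"
    and T: "T \<in> borel_measurable M" "integrable M (\<lambda>\<omega>. (T \<omega>)^2)"
    and uncorrelated: "\<And>k. (\<integral>\<omega>. T \<omega> * \<epsilon> k \<omega> \<partial>M) = 0"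
  shows "(\<integral>\<omega>. (T \<omega> - (\<Sum>k\<in>UNIV. w k * \<epsilon> k \<omega>))^2 \<partial>M)
           = (\<integral>\<omega>. (T \<omega>)^2 \<partial>M) + \<sigma>^2 * (\<Sum>k\<in>UNIV. (w k)^2)"
proof -
  have \<epsilon>: "\<epsilon> k \<in> borel_measurable M" for k using ind unfolding indep_vars_def2 by auto
  have int_T\<epsilon>: "integrable M (\<lambda>\<omega>. T \<omega> * \<epsilon> k \<omega>)" for k
    using square_integrable_mult[OF T(1) \<epsilon> T(2)] var by blast
  have int_\<epsilon>\<epsilon>: "integrable M (\<lambda>\<omega>. \<epsilon> k \<omega> * \<epsilon> l \<omega>)" for k l
    using square_integrable_mult[OF \<epsilon> \<epsilon>] var by blast
  have cov: "(\<integral>\<omega>. \<epsilon> k \<omega> * \<epsilon> l \<omega> \<partial>M) = (if k = l then \<sigma>^2 else 0)" for k l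
  proof (cases "k = l")
    case False
    have "indep_vars (\<lambda>_. borel) \<epsilon> {k, l}" by (rule indep_vars_subset[OF ind]) auto
    then have "(\<integral>\<omega>. (\<Prod>i\<in>{k,l}. \<epsilon> i \<omega>) \<partial>M) = (\<Prod>i\<in>{k,l}. \<integral>\<omega>. \<epsilon> i \<omega> \<partial>M)"
      by (intro indep_vars_lebesgue_integral) (use mean in auto)
    then show ?thesis using False mean by simp
  qed (use var in \<open>simp add: power2_eq_square\<close>)
  have expand: "(T \<omega> - (\<Sum>k\<in>UNIV. w k * \<epsilon> k \<omega>))^2 = (T \<omega>)^2 - (\<Sum>k\<in>UNIV. 2 * w k * (T \<omega> * \<epsilon> k \<omega>))
      + (\<Sum>k\<in>UNIV. \<Sum>l\<in>UNIV. w k * w l * (\<epsilon> k \<omega> * \<epsilon> l \<omega>))" for \<omega>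
    unfolding power2_diff power2_eq_square sum_product by (simp add: sum_distrib_left algebra_simps)
  have "(\<integral>\<omega>. (T \<omega> - (\<Sum>k\<in>UNIV. w k * \<epsilon> k \<omega>))^2 \<partial>M)
      = (\<integral>\<omega>. (T \<omega>)^2 \<partial>M) - (\<Sum>k\<in>UNIV. 2 * w k * (\<integral>\<omega>. T \<omega> * \<epsilon> k \<omega> \<partial>M))
        + (\<Sum>k\<in>UNIV. \<Sum>l\<in>UNIV. w k * w l * (\<integral>\<omega>. \<epsilon> k \<omega> * \<epsilon> l \<omega> \<partial>M))"
    unfolding expand using T(2) int_T\<epsilon> int_\<epsilon>\<epsilon> by (simp add: Bochner_Integration.integral_sum)
  also have "\<dots> = (\<integral>\<omega>. (T \<omega>)^2 \<partial>M) + \<sigma>^2 * (\<Sum>k\<in>UNIV. (w k)^2)"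
    by (simp add: uncorrelated cov if_distrib sum_distrib_left power2_eq_square mult.commute cong: if_cong)
  finally show ?thesis .
qed

lemma indep_var_from_indep_set:
  fixes M :: "'w measure" and \<Omega> :: "'b set" and Z :: "'b \<Rightarrow> 'w \<Rightarrow> real" and \<epsilon> :: "'n \<Rightarrow> 'w \<Rightarrow> real"
  assumes "prob_space M"
    and ind: "prob_space.indep_set M
           (sets (vimage_algebra (space M) (\<lambda>\<omega>. restrict (\<lambda>y. Z y \<omega>) \<Omega>) (Pi\<^sub>M \<Omega> (\<lambda>_. borel))))
           (sets (vimage_algebra (space M) (\<lambda>\<omega> k. \<epsilon> k \<omega>) (Pi\<^sub>M UNIV (\<lambda>_. borel))))"
    and G: "G \<in> borel_measurable (Pi\<^sub>M \<Omega> (\<lambda>_. borel))"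
    and V: "\<And>\<omega>. \<omega> \<in> space M \<Longrightarrow> V \<omega> = G (restrict (\<lambda>y. Z y \<omega>) \<Omega>)"
    and V_meas: "V \<in> borel_measurable M" and \<epsilon>_meas: "\<epsilon> k \<in> borel_measurable M"
  shows "prob_space.indep_var M borel V borel (\<epsilon> k)"
proof -
  interpret prob_space M by fact
  let ?S1 = "sets (vimage_algebra (space M) (\<lambda>\<omega>. restrict (\<lambda>y. Z y \<omega>) \<Omega>) (Pi\<^sub>M \<Omega> (\<lambda>_. borel)))"
  let ?S2 = "sets (vimage_algebra (space M) (\<lambda>\<omega> k. \<epsilon> k \<omega>) (Pi\<^sub>M UNIV (\<lambda>_. borel)))"
  have S1: "V -` A \<inter> space M \<in> ?S1" if "A \<in> sets borel" for A
  proof -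
    have "V -` A \<inter> space M
        = (\<lambda>\<omega>. restrict (\<lambda>y. Z y \<omega>) \<Omega>) -` (G -` A \<inter> space (Pi\<^sub>M \<Omega> (\<lambda>_. borel))) \<inter> space M"
      using V by (auto simp: space_PiM)
    moreover have "(\<lambda>\<omega>. restrict (\<lambda>y. Z y \<omega>) \<Omega>) -` (G -` A \<inter> space (Pi\<^sub>M \<Omega> (\<lambda>_. borel))) \<inter> space M \<in> ?S1"
      by (rule in_vimage_algebra[OF measurable_sets[OF G that]])
    ultimately show ?thesis by (simp only:)
  qed
  have S2: "\<epsilon> k -` A \<inter> space M \<in> ?S2" if "A \<in> sets borel" for A
  proof -
    have "\<epsilon> k -` A \<inter> space M
        = (\<lambda>\<omega> k. \<epsilon> k \<omega>) -` ((\<lambda>v. v k) -` A \<inter> space (Pi\<^sub>M UNIV (\<lambda>_::'n. borel))) \<inter> space M"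
      by (auto simp: space_PiM)
    moreover have "(\<lambda>v. v k) -` A \<inter> space (Pi\<^sub>M UNIV (\<lambda>_::'n. borel)) \<in> sets (Pi\<^sub>M UNIV (\<lambda>_. borel))"
      using measurable_component_singleton[of k UNIV "\<lambda>_. borel"] that by (auto intro: measurable_sets)
    ultimately show ?thesis by (simp only: in_vimage_algebra)
  qed
  have indep: "indep_sets (case_bool ?S1 ?S2) UNIV" using ind unfolding indep_set_def .
  show ?thesis
    unfolding indep_var_def indep_vars_def2
  proof
    show "\<forall>i\<in>UNIV. random_variable (case_bool borel borel i) (case_bool V (\<epsilon> k) i)"
      using V_meas \<epsilon>_meas by (auto split: bool.split)
    show "indep_sets (\<lambda>i. {case_bool V (\<epsilon> k) i -` A \<inter> space M |A. A \<in> sets (case_bool borel borel i)}) UNIV"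
      by (rule indep_sets_mono_sets[OF indep]) (use S1 S2 in \<open>auto split: bool.split\<close>)
  qed
qed

lemma centered_gp_measurable:
  assumes "centered_gp M \<Omega> \<Psi> Z" "y \<in> \<Omega>"
  shows "Z y \<in> borel_measurable M"
proof -
  have "fin_coeffs \<Omega> (indicator {y})" using assms(2) by (simp add: fin_coeffs_def)
  moreover have "indicator {y} y \<noteq> (0::real)" by simp
  ultimately have "(\<lambda>\<omega>. pairing (indicator {y}) (\<lambda>z. Z z \<omega>)) \<in> borel_measurable M"
    using assms(1) unfolding centered_gp_def pairing_def[symmetric]
    by (metis distributed_measurable measurable_lborel1)
  then show ?thesis by (simp add: pairing_indicator)
qed

lemma centered_gp_second_moment:
  assumes "prob_space M" and K: "stationary_pd_kernel \<Psi>" and Z: "centered_gp M \<Omega> \<Psi> Z"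
    and d: "fin_coeffs \<Omega> d"
  shows "integrable M (\<lambda>\<omega>. (pairing d (\<lambda>y. Z y \<omega>))^2)"
    and "(\<integral>\<omega>. (pairing d (\<lambda>y. Z y \<omega>))^2 \<partial>M) = kip \<Psi> d d"
proof -
  interpret prob_space M by fact
  define V where "V \<omega> = pairing d (\<lambda>y. Z y \<omega>)" for \<omega>
  have "integrable M (\<lambda>\<omega>. (V \<omega>)^2) \<and> (\<integral>\<omega>. (V \<omega>)^2 \<partial>M) = kip \<Psi> d d"
  proof (cases "\<exists>y. d y \<noteq> 0")
    case True
    have D: "distributed M lborel V (normal_density 0 (sqrt (kip \<Psi> d d)))"
      using Z d True unfolding centered_gp_def V_def pairing_def by blast
    have "kip \<Psi> d d > 0" using K d True unfolding stationary_pd_kernel_def fin_coeffs_def by auto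
    then have s: "sqrt (kip \<Psi> d d) > 0" by simp
    have "integrable lborel (\<lambda>t. normal_density 0 (sqrt (kip \<Psi> d d)) t * t^2)"
      using integrable_normal_moment[of "sqrt (kip \<Psi> d d)" 0 2] s by simp
    then have "integrable M (\<lambda>\<omega>. (V \<omega>)^2)"
      using distributed_integrable[OF D, of "\<lambda>t. t^2"] by (simp add: normal_density_nonneg)
    moreover have "variance V = (sqrt (kip \<Psi> d d))^2" by (rule normal_distributed_variance[OF s D])
    moreover have "expectation V = 0" by (rule normal_distributed_expectation[OF s D])
    ultimately show ?thesis using s by simp
  next
    case False
    then have "d = (\<lambda>y. 0)" by auto
    then show ?thesis by (simp add: V_def pairing_def kip_def)
  qed
  then show "integrable M (\<lambda>\<omega>. (pairing d (\<lambda>y. Z y \<omega>))^2)"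
    and "(\<integral>\<omega>. (pairing d (\<lambda>y. Z y \<omega>))^2 \<partial>M) = kip \<Psi> d d"
    unfolding V_def by auto
qed

lemma (in prob_space) deterministic_prediction_error:
  fixes \<epsilon> :: "'n::finite \<Rightarrow> 'a \<Rightarrow> real"
  assumes "indep_vars (\<lambda>_. borel) \<epsilon> UNIV"
    and mean: "\<forall>k. integrable M (\<epsilon> k) \<and> (\<integral>\<omega>. \<epsilon> k \<omega> \<partial>M) = 0"
    and "\<forall>k. integrable M (\<lambda>\<omega>. (\<epsilon> k \<omega>)^2) \<and> (\<integral>\<omega>. (\<epsilon> k \<omega>)^2 \<partial>M) = \<sigma>^2"
  shows "(\<integral>\<omega>. (u - (\<Sum>k\<in>UNIV. w k * \<epsilon> k \<omega>))^2 \<partial>M) = u^2 + \<sigma>^2 * (\<Sum>k\<in>UNIV. (w k)^2)"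
  using second_moment_minus_weighted_noise[OF assms, of "\<lambda>_. u" w] mean by (simp add: prob_space)

lemma gp_prediction_error:
  fixes M :: "'w measure" and Z :: "'a::ab_group_add \<Rightarrow> 'w \<Rightarrow> real"
    and \<epsilon> :: "'n::finite \<Rightarrow> 'w \<Rightarrow> real" and X :: "'n \<Rightarrow> 'a"
  assumes "prob_space M" and K: "stationary_pd_kernel \<Psi>" and Z: "centered_gp M \<Omega> \<Psi> Z"
    and X: "inj X" "\<forall>k. X k \<in> \<Omega>" and x: "x \<in> \<Omega>"
    and noise: "prob_space.indep_vars M (\<lambda>_. borel) \<epsilon> UNIV"
      "\<forall>k. integrable M (\<epsilon> k) \<and> (\<integral>\<omega>. \<epsilon> k \<omega> \<partial>M) = 0"
      "\<forall>k. integrable M (\<lambda>\<omega>. (\<epsilon> k \<omega>)^2) \<and> (\<integral>\<omega>. (\<epsilon> k \<omega>)^2 \<partial>M) = \<sigma>^2"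
    and indep: "prob_space.indep_set M
           (sets (vimage_algebra (space M) (\<lambda>\<omega>. restrict (\<lambda>y. Z y \<omega>) \<Omega>) (Pi\<^sub>M \<Omega> (\<lambda>_. borel))))
           (sets (vimage_algebra (space M) (\<lambda>\<omega> k. \<epsilon> k \<omega>) (Pi\<^sub>M UNIV (\<lambda>_. borel))))"
  shows "(\<integral>\<omega>. (Z x \<omega> - (\<Sum>k\<in>UNIV. w$k * (Z (X k) \<omega> + \<epsilon> k \<omega>)))^2 \<partial>M)
           = kip \<Psi> (error_coeffs X w x) (error_coeffs X w x) + \<sigma>^2 * (\<Sum>k\<in>UNIV. (w$k)^2)"
proof -
  interpret prob_space M by fact
  define d where "d = error_coeffs X w x"
  define V where "V \<omega> = Z x \<omega> - (\<Sum>k\<in>UNIV. w$k * Z (X k) \<omega>)" for \<omega>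
  have V_pairing: "V = (\<lambda>\<omega>. pairing d (\<lambda>y. Z y \<omega>))"
    unfolding V_def d_def pairing_error_coeffs[OF X(1)] ..
  have V_meas: "V \<in> borel_measurable M"
    unfolding V_def
    by (intro borel_measurable_diff borel_measurable_sum borel_measurable_times borel_measurable_const
        centered_gp_measurable[OF Z] x X(2)[rule_format])
  have V2: "integrable M (\<lambda>\<omega>. (V \<omega>)^2)" "(\<integral>\<omega>. (V \<omega>)^2 \<partial>M) = kip \<Psi> d d"
    using centered_gp_second_moment[OF \<open>prob_space M\<close> K Z fin_coeffs_error_coeffs[OF X(2) x, of w]]
    unfolding V_pairing d_def by simp_all
  have \<epsilon>_meas: "\<epsilon> k \<in> borel_measurable M" for k using noise(1) unfolding indep_vars_def2 by auto
  have "(\<integral>\<omega>. V \<omega> * \<epsilon> k \<omega> \<partial>M) = 0" for k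
  proof -
    have G: "(\<lambda>z. z x - (\<Sum>k\<in>UNIV. w$k * z (X k))) \<in> borel_measurable (Pi\<^sub>M \<Omega> (\<lambda>_. borel))"
      by (intro borel_measurable_diff borel_measurable_sum borel_measurable_times borel_measurable_const
          measurable_component_singleton[of _ \<Omega> "\<lambda>_. borel", simplified] x X(2)[rule_format])
    have "indep_var borel V borel (\<epsilon> k)"
      by (rule indep_var_from_indep_set[OF \<open>prob_space M\<close> indep G _ V_meas \<epsilon>_meas])
         (use X(2) x in \<open>simp add: V_def\<close>)
    moreover have "integrable M V" by (rule square_integrable_imp_integrable[OF V_meas V2(1)])
    ultimately show ?thesis using indep_var_lebesgue_integral noise(2) by fastforce
  qed
  moreover have "Z x \<omega> - (\<Sum>k\<in>UNIV. w$k * (Z (X k) \<omega> + \<epsilon> k \<omega>)) = V \<omega> - (\<Sum>k\<in>UNIV. w$k * \<epsilon> k \<omega>)" for \<omega>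
    unfolding V_def by (simp add: sum.distrib algebra_simps)
  ultimately show ?thesis
    using second_moment_minus_weighted_noise[OF noise V_meas V2(1), of "\<lambda>k. w$k"] V2(2)
    unfolding d_def by simp
qed

lemma add_le_max_one_mult:
  fixes a b n s :: real
  assumes "a \<le> b * n" "0 \<le> b" "0 \<le> s"
  shows "a + s \<le> max 1 n * (b + s)"
proof -
  have "b * n \<le> b * max 1 n" by (rule mult_left_mono) (simp_all add: assms(2))
  moreover have "s \<le> max 1 n * s" using mult_right_mono[OF max.cobounded1 assms(3), of 1 n] by (simp only: mult_1)
  moreover have "max 1 n * (b + s) = b * max 1 n + max 1 n * s" by (simp add: algebra_simps)
  ultimately show ?thesis using assms(1) by linarith
qed

theorem proposition3:
  fixes M :: "'w measure" and \<Omega> :: "(real^'d) set"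
    and \<Psi> \<Phi> :: "real^'d \<Rightarrow> real" and X :: "'n::finite \<Rightarrow> real^'d"
    and \<epsilon> :: "'n \<Rightarrow> 'w \<Rightarrow> real" and \<sigma> :: real
    and f :: "real^'d \<Rightarrow> real" and Z :: "real^'d \<Rightarrow> 'w \<Rightarrow> real"
    and lam \<mu> :: real and x :: "real^'d"
  assumes "prob_space M"
    and "stationary_pd_kernel \<Psi>" and "stationary_pd_kernel \<Phi>"
    and "integrable lborel \<Psi>" and "integrable lborel \<Phi>"
    and "inj X" and "\<forall>k. X k \<in> \<Omega>"
    and "prob_space.indep_vars M (\<lambda>_. borel) \<epsilon> UNIV"
    and "\<forall>k l. distr M borel (\<epsilon> k) = distr M borel (\<epsilon> l)"
    and "\<forall>k. integrable M (\<epsilon> k) \<and> (\<integral>\<omega>. \<epsilon> k \<omega> \<partial>M) = 0"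
    and "\<forall>k. integrable M (\<lambda>\<omega>. (\<epsilon> k \<omega>)^2) \<and> (\<integral>\<omega>. (\<epsilon> k \<omega>)^2 \<partial>M) = \<sigma>^2"
    and "f \<in> native_space \<Psi> \<Omega>"
    and "centered_gp M \<Omega> \<Psi> Z"
    and "prob_space.indep_set M
           (sets (vimage_algebra (space M) (\<lambda>\<omega>. restrict (\<lambda>y. Z y \<omega>) \<Omega>) (Pi\<^sub>M \<Omega> (\<lambda>_. borel))))
           (sets (vimage_algebra (space M) (\<lambda>\<omega> k. \<epsilon> k \<omega>) (Pi\<^sub>M UNIV (\<lambda>_. borel))))"
    and "\<mu> > 0" and "lam = \<mu> / real CARD('n)"
    and "x \<in> \<Omega>"
  shows "(\<integral>\<omega>. (f x - krr \<Phi> \<Omega> X (\<lambda>k. f (X k) + \<epsilon> k \<omega>) lam x)^2 \<partial>M)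
           \<le> max 1 ((native_norm \<Psi> \<Omega> f)^2) *
             (\<integral>\<omega>. (Z x \<omega> - gp_pred \<Phi> X \<mu> (\<chi> k. Z (X k) \<omega> + \<epsilon> k \<omega>) x)^2 \<partial>M)"
proof -
  interpret prob_space M by fact
  define w where "w = gp_weights \<Phi> X \<mu> x"
  define d where "d = error_coeffs X w x"
  define W where "W = \<sigma>^2 * (\<Sum>k\<in>UNIV. (w$k)^2)"
  have "krr \<Phi> \<Omega> X y lam x = (\<Sum>k\<in>UNIV. w$k * y k)" for y
    using krr_eq_kfun_ridge_solution[OF assms(3,6,7,15,16,17)] gp_pred_eq_kfun_ridge_solution[OF assms(6)]
    unfolding gp_pred_eq_sum w_def by simp
  then have lhs: "(\<integral>\<omega>. (f x - krr \<Phi> \<Omega> X (\<lambda>k. f (X k) + \<epsilon> k \<omega>) lam x)^2 \<partial>M) = (pairing d f)^2 + W"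
    using deterministic_prediction_error[OF assms(8,10,11), of "pairing d f" "\<lambda>k. w$k"]
    unfolding d_def W_def pairing_error_coeffs[OF assms(6)] by (simp add: sum.distrib algebra_simps)
  have rhs: "(\<integral>\<omega>. (Z x \<omega> - gp_pred \<Phi> X \<mu> (\<chi> k. Z (X k) \<omega> + \<epsilon> k \<omega>) x)^2 \<partial>M) = kip \<Psi> d d + W"
    using gp_prediction_error[OF assms(1,2,13,6,7,17,8,10,11,14)]
    unfolding gp_pred_eq_sum d_def W_def w_def by simp
  have "(pairing d f)^2 \<le> kip \<Psi> d d * (native_norm \<Psi> \<Omega> f)^2"
    unfolding d_def by (rule native_space_pairing_bound[OF assms(2,12) fin_coeffs_error_coeffs[OF assms(7,17)]])
  moreover have "0 \<le> kip \<Psi> d d"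
    using kip_nonneg[OF assms(2)] fin_coeffs_error_coeffs[OF assms(7,17)] unfolding d_def fin_coeffs_def by blast
  moreover have "0 \<le> W" unfolding W_def by (simp add: sum_nonneg)
  ultimately show ?thesis unfolding lhs rhs by (rule add_le_max_one_mult)
qed

end
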